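(* Let $i\ge2$, $j\ge1$ and $k\ge1$ be integers and let $x=(10)^i0(10)^j0(10)^k$. Then $[x]_2\notin R$.
   Context: Stern's sequence $(a(n))_{n\ge0}$: $a(0)=0$, $a(1)=1$, $a(2n)=a(n)$, $a(2n+1)=a(n)+a(n+1)$; $s(n)=a(n+1)$. $R$ is the set of record-setters of $s$, i.e. indices $v\ge0$ with $s(i)<s(v)$ for all $i<v$. For a binary string $x$, $[x]_2$ is the integer it represents in base 2; $x^i$ denotes $i$-fold concatenation. *)

theory Defs
  imports Main
begin

function stern :: "nat \<Rightarrow> nat" where
  "stern n = (if n = 0 then 0 else if n = 1 then 1
              else if even n then stern (n div 2)
              else stern (n div 2) + stern (n div 2 + 1))"
  by auto
termination by (relation "measure id") (auto elim!: oddE)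

definition s :: "nat \<Rightarrow> nat" where
  "s n = stern (n + 1)"

definition R :: "nat set" where
  "R = {v. \<forall>i<v. s i < s v}"

definition bin_val :: "nat list \<Rightarrow> nat" where
  "bin_val xs = foldl (\<lambda>acc d. 2 * acc + d) 0 xs"

definition pow_str :: "nat list \<Rightarrow> nat \<Rightarrow> nat list" where
  "pow_str x i = concat (replicate i x)"

end

theory Submission
  imports Defs "HOL-Number_Theory.Fib"
begin

text \<open>Appending a binary digit to a word acts linearly on the pair (a(v), a(v+1)), and the block 10
  acts by the symmetric matrix with rows (1, 1), (1, 2); hence (10)^n acts by the matrix with rows
  (F(2n-1), F(2n)), (F(2n), F(2n+1)) of Fibonacci numbers. The word
  y = (10)^(i-1) 010 (10)^j (10)^k 0 is smaller than x = (10)^(i-1) 100 (10)^j 0 (10)^k, and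
  multiplying out the two matrix products shows s([x]_2) \<le> s([y]_2); the only estimate needed is
  F(2n+1) \<le> 2 F(2n) for n \<ge> 1, applied to the first and last blocks.\<close>

declare stern.simps[simp del]

lemma stern_double: "stern (2 * n) = stern n"
  by (subst stern.simps) (auto simp: stern.simps)

lemma stern_double_Suc: "stern (2 * n + 1) = stern n + stern (n + 1)"
  by (subst stern.simps) (auto simp: stern.simps)

lemma bin_val_snoc: "bin_val (xs @ [d]) = 2 * bin_val xs + d"
  by (simp add: bin_val_def)

lemma bin_val_append: "bin_val (xs @ ys) = bin_val xs * 2 ^ length ys + bin_val ys"
  by (induction ys rule: rev_induct) (simp_all add: bin_val_def algebra_simps)

lemma bin_val_less_power: "set ys \<subseteq> {0, 1} \<Longrightarrow> bin_val ys < 2 ^ length ys"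
  by (induction ys rule: rev_induct) (auto simp: bin_val_snoc bin_val_def)

lemma bin_val_less_at_first_difference:
  assumes "length ys = length zs" and "set ys \<subseteq> {0, 1}"
  shows "bin_val (xs @ 0 # ys) < bin_val (xs @ 1 # zs)"
proof -
  have "bin_val (0 # ys) < bin_val (1 # zs)"
    using bin_val_less_power[OF assms(2)] bin_val_append[of "[0]" ys] bin_val_append[of "[1]" zs]
      assms(1) by (simp add: bin_val_def)
  then show ?thesis
    using assms(1) by (simp add: bin_val_append)
qed

lemma pow_str_Suc: "pow_str x (Suc n) = pow_str x n @ x"
  by (simp add: pow_str_def replicate_append_same[symmetric])

lemma set_pow_str: "set (pow_str x n) \<subseteq> set x"
  by (auto simp: pow_str_def)

lemma length_pow_str: "length (pow_str x n) = n * length x"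
  by (simp add: pow_str_def length_concat sum_list_replicate)

lemma not_record_setter: "w < v \<Longrightarrow> s v \<le> s w \<Longrightarrow> v \<notin> R"
  by (auto simp: R_def not_less[symmetric])

definition stern_step :: "nat \<Rightarrow> nat \<times> nat \<Rightarrow> nat \<times> nat" where
  "stern_step d p = (if d = 0 then (fst p, fst p + snd p) else (fst p + snd p, snd p))"

definition stern_pair :: "nat list \<Rightarrow> nat \<times> nat" where
  "stern_pair xs = (stern (bin_val xs), stern (bin_val xs + 1))"

lemma stern_pair_snoc: "d \<in> {0, 1} \<Longrightarrow> stern_pair (xs @ [d]) = stern_step d (stern_pair xs)"
  using stern_double[of "bin_val xs"] stern_double[of "bin_val xs + 1"] stern_double_Suc[of "bin_val xs"]
  by (auto simp: stern_pair_def stern_step_def bin_val_snoc)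

lemma stern_pair_eq_fold: "set xs \<subseteq> {0, 1} \<Longrightarrow> stern_pair xs = fold stern_step xs (0, 1)"
proof (induction xs rule: rev_induct)
  case Nil
  show ?case by (simp add: stern_pair_def bin_val_def stern.simps)
next
  case (snoc d xs)
  then show ?case by (simp add: stern_pair_snoc)
qed

lemma s_bin_val_eq_fold: "set xs \<subseteq> {0, 1} \<Longrightarrow> s (bin_val xs) = snd (fold stern_step xs (0, 1))"
  by (metis s_def stern_pair_def stern_pair_eq_fold snd_conv Suc_eq_plus1)

lemma fib_add_three: "fib (n + 1) + fib (n + 2) = fib (n + 3)"
  by (simp add: numeral_eq_Suc)

lemma fib_Suc_le_double: "n > 0 \<Longrightarrow> fib (Suc n) \<le> 2 * fib n"
  using fib_mono[of "n - 1" n] by (cases n) simp_all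

lemma fold_stern_step_blocks:
  "fold stern_step (pow_str [1, 0] (Suc m)) (u, v) =
     (fib (2 * m + 1) * u + fib (2 * m + 2) * v, fib (2 * m + 2) * u + fib (2 * m + 3) * v)"
proof (induction m)
  case 0
  show ?case by (simp add: pow_str_def stern_step_def numeral_eq_Suc)
next
  case (Suc m)
  have fib_rec: "fib (2 * m + 3) = fib (2 * m + 1) + fib (2 * m + 2)"
    "fib (2 * Suc m + 1) = fib (2 * m + 1) + fib (2 * m + 2)"
    "fib (2 * Suc m + 2) = fib (2 * m + 1) + 2 * fib (2 * m + 2)"
    "fib (2 * Suc m + 3) = 2 * fib (2 * m + 1) + 3 * fib (2 * m + 2)"
    by (simp_all add: numeral_eq_Suc)
  have "fold stern_step (pow_str [1, 0] (Suc (Suc m))) (u, v) =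
      fold stern_step [1, 0] (fold stern_step (pow_str [1, 0] (Suc m)) (u, v))"
    by (simp only: pow_str_Suc[of _ "Suc m"] fold_append o_apply)
  also have "\<dots> = (fib (2 * Suc m + 1) * u + fib (2 * Suc m + 2) * v,
                     fib (2 * Suc m + 2) * u + fib (2 * Suc m + 3) * v)"
    unfolding Suc fib_rec by (simp add: stern_step_def algebra_simps)
  finally show ?case .
qed

lemma block_swap_inequality:
  fixes a b \<alpha>\<^sub>1 \<beta>\<^sub>1 \<gamma>\<^sub>1 \<beta>\<^sub>2 \<gamma>\<^sub>2 :: nat
  assumes "b \<le> 2 * a" and "\<alpha>\<^sub>1 + \<beta>\<^sub>1 = \<gamma>\<^sub>1" and "\<gamma>\<^sub>2 \<le> 2 * \<beta>\<^sub>2"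
  shows "2 * \<gamma>\<^sub>1 * \<gamma>\<^sub>2 * b \<le> (\<beta>\<^sub>2 + \<gamma>\<^sub>2) * ((\<beta>\<^sub>1 + 2 * \<gamma>\<^sub>1) * a + \<alpha>\<^sub>1 * b)"
proof -
  have "3 * \<gamma>\<^sub>1 * b \<le> (\<beta>\<^sub>1 + 2 * \<gamma>\<^sub>1) * b + 2 * \<alpha>\<^sub>1 * b"
    using assms(2)[symmetric] by (simp add: algebra_simps)
  also have "\<dots> \<le> 2 * ((\<beta>\<^sub>1 + 2 * \<gamma>\<^sub>1) * a + \<alpha>\<^sub>1 * b)"
    using mult_left_mono[OF assms(1), of "\<beta>\<^sub>1 + 2 * \<gamma>\<^sub>1"] by (simp add: algebra_simps)
  finally have inner: "3 * \<gamma>\<^sub>1 * b \<le> 2 * ((\<beta>\<^sub>1 + 2 * \<gamma>\<^sub>1) * a + \<alpha>\<^sub>1 * b)" .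
  have outer: "3 * \<gamma>\<^sub>2 \<le> 2 * (\<beta>\<^sub>2 + \<gamma>\<^sub>2)"
    using assms(3) by simp
  have "4 * (2 * \<gamma>\<^sub>1 * \<gamma>\<^sub>2 * b) \<le> (3 * \<gamma>\<^sub>2) * (3 * \<gamma>\<^sub>1 * b)"
    by simp
  also have "\<dots> \<le> (2 * (\<beta>\<^sub>2 + \<gamma>\<^sub>2)) * (2 * ((\<beta>\<^sub>1 + 2 * \<gamma>\<^sub>1) * a + \<alpha>\<^sub>1 * b))"
    using outer inner by (rule mult_mono') simp_all
  also have "\<dots> = 4 * ((\<beta>\<^sub>2 + \<gamma>\<^sub>2) * ((\<beta>\<^sub>1 + 2 * \<gamma>\<^sub>1) * a + \<alpha>\<^sub>1 * b))"
    by (simp add: algebra_simps)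
  finally show ?thesis by linarith
qed

lemma snd_fold_stern_step_swap_le:
  assumes "b \<le> 2 * a"
    and Q\<^sub>1: "\<And>u v. fold stern_step Q\<^sub>1 (u, v) = (\<alpha>\<^sub>1 * u + \<beta>\<^sub>1 * v, \<beta>\<^sub>1 * u + \<gamma>\<^sub>1 * v)"
      "\<alpha>\<^sub>1 + \<beta>\<^sub>1 = \<gamma>\<^sub>1"
    and Q\<^sub>2: "\<And>u v. fold stern_step Q\<^sub>2 (u, v) = (\<alpha>\<^sub>2 * u + \<beta>\<^sub>2 * v, \<beta>\<^sub>2 * u + \<gamma>\<^sub>2 * v)"
      "\<alpha>\<^sub>2 + \<beta>\<^sub>2 = \<gamma>\<^sub>2" "\<gamma>\<^sub>2 \<le> 2 * \<beta>\<^sub>2"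
  shows "snd (fold stern_step ([1, 0, 0] @ Q\<^sub>1 @ [0] @ Q\<^sub>2) (a, b))
       \<le> snd (fold stern_step ([0, 1, 0] @ Q\<^sub>1 @ Q\<^sub>2 @ [0]) (a, b))"
proof -
  have "snd (fold stern_step ([1, 0, 0] @ Q\<^sub>1 @ [0] @ Q\<^sub>2) (a, b))
      + (\<beta>\<^sub>2 + \<gamma>\<^sub>2) * ((\<beta>\<^sub>1 + 2 * \<gamma>\<^sub>1) * a + \<alpha>\<^sub>1 * b)
      = snd (fold stern_step ([0, 1, 0] @ Q\<^sub>1 @ Q\<^sub>2 @ [0]) (a, b)) + 2 * \<gamma>\<^sub>1 * \<gamma>\<^sub>2 * b"
    using Q\<^sub>1(2)[symmetric] Q\<^sub>2(2)[symmetric] by (simp add: Q\<^sub>1(1) Q\<^sub>2(1) stern_step_def algebra_simps)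
  with block_swap_inequality[OF assms(1) Q\<^sub>1(2) Q\<^sub>2(3)] show ?thesis
    by linarith
qed

lemma s_bin_val_swap_le:
  fixes m j k :: nat
  defines "P \<equiv> pow_str [1, 0] (Suc m)" and "Q\<^sub>1 \<equiv> pow_str [1, 0] (Suc j)"
    and "Q\<^sub>2 \<equiv> pow_str [1, 0] (Suc k)"
  shows "s (bin_val (P @ [1, 0, 0] @ Q\<^sub>1 @ [0] @ Q\<^sub>2)) \<le> s (bin_val (P @ [0, 1, 0] @ Q\<^sub>1 @ Q\<^sub>2 @ [0]))"
proof -
  have fib_le: "fib (n + 3) \<le> 2 * fib (n + 2)" for n
    using fib_Suc_le_double[of "n + 2"] by (simp add: numeral_eq_Suc)
  have fold_P: "fold stern_step P (0, 1) = (fib (2 * m + 2), fib (2 * m + 3))"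
    unfolding P_def fold_stern_step_blocks by simp
  have "snd (fold stern_step ([1, 0, 0] @ Q\<^sub>1 @ [0] @ Q\<^sub>2) (fold stern_step P (0, 1)))
      \<le> snd (fold stern_step ([0, 1, 0] @ Q\<^sub>1 @ Q\<^sub>2 @ [0]) (fold stern_step P (0, 1)))"
    unfolding fold_P Q\<^sub>1_def Q\<^sub>2_def
    by (rule snd_fold_stern_step_swap_le[OF fib_le fold_stern_step_blocks fib_add_three
          fold_stern_step_blocks fib_add_three fib_le])
  moreover have "set P \<subseteq> {0, 1}" "set Q\<^sub>1 \<subseteq> {0, 1}" "set Q\<^sub>2 \<subseteq> {0, 1}"
    using set_pow_str[of "[1, 0]"] unfolding P_def Q\<^sub>1_def Q\<^sub>2_def by (simp_all add: insert_commute)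
  ultimately show ?thesis
    by (simp add: s_bin_val_eq_fold)
qed

theorem mainTheorem17:
  fixes i j k :: nat
  assumes "i \<ge> 2" and "j \<ge> 1" and "k \<ge> 1"
  shows "bin_val (pow_str [1,0] i @ [0] @ pow_str [1,0] j @ [0] @ pow_str [1,0] k) \<notin> R"
proof -
  have "i = Suc (Suc (i - 2))" "j = Suc (j - 1)" "k = Suc (k - 1)"
    using assms by simp_all
  then obtain m j' k' where ijk: "i = Suc (Suc m)" "j = Suc j'" "k = Suc k'"
    by blast
  define P where "P = pow_str [1, 0 :: nat] (Suc m)"
  define Q\<^sub>1 where "Q\<^sub>1 = pow_str [1, 0 :: nat] j"
  define Q\<^sub>2 where "Q\<^sub>2 = pow_str [1, 0 :: nat] k"
  have x: "pow_str [1, 0] i @ [0] @ pow_str [1, 0] j @ [0] @ pow_str [1, 0] k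
      = P @ [1, 0, 0] @ Q\<^sub>1 @ [0] @ Q\<^sub>2"
    by (simp add: ijk(1) pow_str_Suc P_def Q\<^sub>1_def Q\<^sub>2_def)
  have "bin_val (P @ [0, 1, 0] @ Q\<^sub>1 @ Q\<^sub>2 @ [0]) < bin_val (P @ [1, 0, 0] @ Q\<^sub>1 @ [0] @ Q\<^sub>2)"
    using bin_val_less_at_first_difference[of "[1, 0] @ Q\<^sub>1 @ Q\<^sub>2 @ [0]" "[0, 0] @ Q\<^sub>1 @ [0] @ Q\<^sub>2" P]
      set_pow_str[of "[1, 0]"]
    by (auto simp: Q\<^sub>1_def Q\<^sub>2_def length_pow_str)
  moreover have "s (bin_val (P @ [1, 0, 0] @ Q\<^sub>1 @ [0] @ Q\<^sub>2)) \<le> s (bin_val (P @ [0, 1, 0] @ Q\<^sub>1 @ Q\<^sub>2 @ [0]))"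
    unfolding P_def Q\<^sub>1_def Q\<^sub>2_def ijk by (rule s_bin_val_swap_le)
  ultimately show ?thesis
    unfolding x by (rule not_record_setter)
qed

end
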